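(* Fix $\epsilon,\phi\in\mathbb R$ with $|\phi|>1$ and $\epsilon\ne\phi$. For each $n$, let $(\nu_n,\mathbf y_n)$ be an eigenpair of $T_{n,\epsilon,\phi}$ with $\|\mathbf y_n\|_2=1$, and suppose $\nu_n\to\phi+\phi^{-1}$ as $n\to\infty$. Then: 1. Eventually, $\nu_n$ is an outlier of $T_{n,\epsilon,\phi}$, and there is a constant $c>0$ independent of $n$ such that eventually every eigenvalue $\lambda_n\ne\nu_n$ of $T_{n,\epsilon,\phi}$ satisfies $|\lambda_n-(\phi+\phi^{-1})|\ge c$. 2. $\|\mathbf y_n-P_{\mathbf w_n}\mathbf y_n\|_2\to0$ as $n\to\infty$, where $\mathbf w_n=[\phi^{-n+1},\ldots,\phi^{-1},1]^\top$.
   Context: For $n\ge2$ and real parameters $\epsilon,\phi$, $T_{n,\epsilon,\phi}$ is the real symmetric tridiagonal $n\times n$ matrix with diagonal entries $(\epsilon,0,\ldots,0,\phi)$ and all sub- and super-diagonal entries equal to $1$. An outlier is an eigenvalue not in $[-2,2]$. For $\mathbf u\in\mathbb R^n\setminus\{0\}$, $P_{\mathbf u}$ denotes the orthogonal projector onto $\mathrm{span}\{\mathbf u\}$: $P_{\mathbf u}\mathbf x=\frac{\mathbf x^\top\mathbf u}{\mathbf u^\top\mathbf u}\mathbf u$. *)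

theory Defs
  imports "Jordan_Normal_Form.Char_Poly"
begin

definition tridiag_T :: "nat \<Rightarrow> real \<Rightarrow> real \<Rightarrow> real mat" where
  "tridiag_T n eps phi = mat n n (\<lambda>(i,j).
     if i = j then (if i = 0 then eps else if i = n - 1 then phi else 0)
     else if i = j + 1 \<or> j = i + 1 then 1 else 0)"

definition norm2 :: "real vec \<Rightarrow> real" where
  "norm2 v = sqrt (v \<bullet> v)"

definition proj_onto :: "real vec \<Rightarrow> real vec \<Rightarrow> real vec" where
  "proj_onto u x = ((x \<bullet> u) / (u \<bullet> u)) \<cdot>\<^sub>v u"

definition outlier :: "real mat \<Rightarrow> real \<Rightarrow> bool" where
  "outlier A lam \<longleftrightarrow> eigenvalue A lam \<and> lam \<notin> {-2..2}"

definition w_vec :: "nat \<Rightarrow> real \<Rightarrow> real vec" where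
  "w_vec n phi = vec n (\<lambda>i. 1 / phi ^ (n - 1 - i))"

end

theory Submission
  imports Defs
begin

(*
  Let v be a unit eigenvector of T with eigenvalue lam = phi + 1/phi + delta. Away from the ends,
  v(i-1) + v(i+1) = lam v(i), a recurrence whose characteristic roots are close to phi and 1/phi.
  Hence inv_phi_defect i = v(i) - v(i-1)/phi grows by the factor phi up to an error delta v(i);
  running it backwards from its bounded value at n-1 shows that its value (phi - eps + delta) v(0)
  at 1 is O(|phi|^(2-n) + |delta|), so v(0) is that small too, because eps and phi differ. Next,
  phi_defect i = v(i) - phi v(i-1) decays by the factor 1/phi up to delta v(i), and
  w_residual i = v(i) - v(n-1) phi^(i-n+1) decays backwards by 1/phi up to phi_defect i; both
  contractions are controlled in l^2. Thus v lies within O(|phi|^(2-n) + |delta|) of the line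
  spanned by w, uniformly in n. Two orthogonal unit vectors cannot
  both be that close to one line, which gives the eigenvalue gap, and the projection of y_n onto w
  is at least as close to y_n as y_n(n-1) w is.
*)

section \<open>The matrix T\<close>

lemma tridiag_T_carrier: "tridiag_T n eps phi \<in> carrier_mat n n"
  by (simp add: tridiag_T_def)

lemma transpose_tridiag_T: "transpose_mat (tridiag_T n eps phi) = tridiag_T n eps phi"
  by (rule eq_matI) (auto simp: tridiag_T_def)

lemma eigenvector_tridiag_T_carrier:
  "eigenvector (tridiag_T n eps phi) u lam \<Longrightarrow> u \<in> carrier_vec n"
  by (simp add: eigenvector_def tridiag_T_def)

lemma tridiag_T_mult_vec_first:
  assumes "n \<ge> 2" "u \<in> carrier_vec n"
  shows "(tridiag_T n eps phi *\<^sub>v u) $ 0 = eps * u $ 0 + u $ 1"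
proof -
  have "(tridiag_T n eps phi *\<^sub>v u) $ 0 = (\<Sum>j<n. tridiag_T n eps phi $$ (0, j) * u $ j)"
    using assms by (simp add: tridiag_T_def scalar_prod_def atLeast0LessThan)
  also have "\<dots> = (\<Sum>j<n. (if j = 0 then eps * u $ 0 else 0) + (if j = 1 then u $ 1 else 0))"
    using assms by (intro sum.cong) (auto simp: tridiag_T_def)
  finally show ?thesis
    using assms by (simp add: sum.distrib)
qed

lemma tridiag_T_mult_vec_interior:
  assumes "1 \<le> i" "i + 2 \<le> n" "u \<in> carrier_vec n"
  shows "(tridiag_T n eps phi *\<^sub>v u) $ i = u $ (i - 1) + u $ (i + 1)"
proof -
  have "(tridiag_T n eps phi *\<^sub>v u) $ i = (\<Sum>j<n. tridiag_T n eps phi $$ (i, j) * u $ j)"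
    using assms by (simp add: tridiag_T_def scalar_prod_def atLeast0LessThan)
  also have "\<dots> = (\<Sum>j<n. (if j = i - 1 then u $ (i - 1) else 0) + (if j = i + 1 then u $ (i + 1) else 0))"
    using assms by (intro sum.cong) (auto simp: tridiag_T_def)
  finally show ?thesis
    using assms by (simp add: sum.distrib)
qed

lemma eigenvector_symmetric_orthogonal:
  fixes A :: "real mat"
  assumes "A \<in> carrier_mat n n" "transpose_mat A = A"
    and "eigenvector A u lam" "eigenvector A y mu" "lam \<noteq> mu"
  shows "u \<bullet> y = 0"
proof -
  have u: "u \<in> carrier_vec n" and Au: "A *\<^sub>v u = lam \<cdot>\<^sub>v u"
    and y: "y \<in> carrier_vec n" and Ay: "A *\<^sub>v y = mu \<cdot>\<^sub>v y"
    using assms unfolding eigenvector_def by auto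
  have "(transpose_mat A *\<^sub>v u) \<bullet> y = u \<bullet> (A *\<^sub>v y)"
    by (rule transpose_vec_mult_scalar[OF assms(1) y u])
  then have "lam * (u \<bullet> y) = mu * (u \<bullet> y)"
    using u y by (simp add: assms(2) Au Ay)
  then show ?thesis
    using assms(5) by simp
qed

lemma norm2_nonneg: "norm2 v \<ge> 0"
  unfolding norm2_def scalar_prod_def by (simp add: sum_nonneg)

lemma norm2_sq_eq_sum:
  assumes "v \<in> carrier_vec n"
  shows "(norm2 v)\<^sup>2 = (\<Sum>i<n. (v $ i)\<^sup>2)"
proof -
  have "v \<bullet> v = (\<Sum>i<n. (v $ i)\<^sup>2)"
    using assms by (simp add: scalar_prod_def atLeast0LessThan power2_eq_square)
  then show ?thesis
    by (simp add: norm2_def sum_nonneg)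
qed

lemma eigenvalue_imp_unit_eigenvector:
  fixes A :: "real mat"
  assumes "A \<in> carrier_mat n n" "eigenvalue A lam"
  obtains u where "eigenvector A u lam" "norm2 u = 1"
proof -
  obtain v where v: "eigenvector A v lam"
    using assms(2) unfolding eigenvalue_def by blast
  then have vc: "v \<in> carrier_vec n" and Av: "A *\<^sub>v v = lam \<cdot>\<^sub>v v"
    and "v \<noteq> 0\<^sub>v n"
    using assms(1) unfolding eigenvector_def by auto
  then obtain k where k: "k < n" "v $ k \<noteq> 0"
    by (metis carrier_vecD eq_vecI index_zero_vec)
  then have "(\<Sum>i<n. (v $ i)\<^sup>2) > 0"
    by (intro sum_pos2[of _ k]) auto
  then have s: "norm2 v > 0"
    using norm2_sq_eq_sum[OF vc] norm2_nonneg[of v] by (auto simp: less_le)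
  define u where "u = (1 / norm2 v) \<cdot>\<^sub>v v"
  have "u $ k \<noteq> 0"
    using k s vc by (simp add: u_def)
  then have "u \<noteq> 0\<^sub>v n"
    using k by auto
  then have "eigenvector A u lam"
    using assms(1) vc Av unfolding eigenvector_def u_def
    by (auto simp: mult_mat_vec smult_smult_assoc mult.commute)
  moreover have "norm2 u = 1"
    using s unfolding u_def norm2_def by (simp add: real_sqrt_mult)
  ultimately show thesis by (rule that)
qed

lemma norm2_minus_proj_onto_le:
  assumes "y \<in> carrier_vec n" "w \<in> carrier_vec n"
  shows "norm2 (y - proj_onto w y) \<le> norm2 (y - c \<cdot>\<^sub>v w)"
proof -
  define Q where "Q = (\<Sum>i<n. y $ i * y $ i)"
  define Y where "Y = (\<Sum>i<n. y $ i * w $ i)"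
  define W where "W = (\<Sum>i<n. w $ i * w $ i)"
  have dist_sq: "(norm2 (y - x \<cdot>\<^sub>v w))\<^sup>2 = Q - 2 * x * Y + x\<^sup>2 * W" for x
  proof -
    have "(norm2 (y - x \<cdot>\<^sub>v w))\<^sup>2 = (\<Sum>i<n. (y $ i - x * w $ i)\<^sup>2)"
      using assms by (simp add: norm2_sq_eq_sum[of _ n])
    also have "\<dots> = (\<Sum>i<n. y $ i * y $ i - 2 * x * (y $ i * w $ i) + x\<^sup>2 * (w $ i * w $ i))"
      by (intro sum.cong) (simp_all add: power2_eq_square algebra_simps)
    finally show ?thesis
      by (simp add: Q_def Y_def W_def sum.distrib sum_subtractf sum_distrib_left)
  qed
  have proj: "proj_onto w y = (Y / W) \<cdot>\<^sub>v w"
    using assms by (simp add: proj_onto_def Y_def W_def scalar_prod_def atLeast0LessThan)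
  have "W \<ge> 0"
    unfolding W_def by (simp add: sum_nonneg)
  moreover have "Y = 0" if "W = 0"
  proof -
    have "\<forall>i<n. w $ i = 0"
      using that unfolding W_def by (simp add: sum_nonneg_eq_0_iff)
    then show ?thesis
      unfolding Y_def by simp
  qed
  ultimately have "Q - 2 * (Y / W) * Y + (Y / W)\<^sup>2 * W \<le> Q - 2 * c * Y + c\<^sup>2 * W"
  proof (cases "W = 0")
    case False
    then have "Q - 2 * c * Y + c\<^sup>2 * W - (Q - 2 * (Y / W) * Y + (Y / W)\<^sup>2 * W) = (c * W - Y)\<^sup>2 / W"
      by (simp add: field_simps power2_eq_square)
    then show ?thesis
      using \<open>W \<ge> 0\<close> by (metis diff_ge_0_iff_ge divide_nonneg_nonneg zero_le_power2)
  qed simp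
  then have "(norm2 (y - proj_onto w y))\<^sup>2 \<le> (norm2 (y - c \<cdot>\<^sub>v w))\<^sup>2"
    unfolding proj dist_sq .
  then show ?thesis
    by (simp add: norm2_nonneg power2_le_iff_abs_le)
qed

lemma orthonormal_not_both_near_line:
  assumes "u \<in> carrier_vec n" "y \<in> carrier_vec n" "w \<in> carrier_vec n"
    and "norm2 u = 1" "norm2 y = 1" "u \<bullet> y = 0"
    and "norm2 (u - a \<cdot>\<^sub>v w) \<le> 1/2" "norm2 (y - b \<cdot>\<^sub>v w) \<le> 1/2"
  shows False
proof -
  define U where "U i = u $ i - a * w $ i" for i
  define V where "V i = y $ i - b * w $ i" for i
  have u: "(\<Sum>i<n. (u $ i)\<^sup>2) = 1" and y: "(\<Sum>i<n. (y $ i)\<^sup>2) = 1"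
    using assms(1,2,4,5) norm2_sq_eq_sum by fastforce+
  have uy: "(\<Sum>i<n. u $ i * y $ i) = 0"
    using assms(1,2,6) by (simp add: scalar_prod_def atLeast0LessThan)
  have near_sq: "(norm2 (x - c \<cdot>\<^sub>v w))\<^sup>2 \<le> 1/4" if "norm2 (x - c \<cdot>\<^sub>v w) \<le> 1/2" for x c
    using power_mono[OF that norm2_nonneg, of 2] by (simp add: power_divide)
  have U: "(\<Sum>i<n. (U i)\<^sup>2) \<le> 1/4" and V: "(\<Sum>i<n. (V i)\<^sup>2) \<le> 1/4"
    using near_sq[OF assms(7)] near_sq[OF assms(8)] assms(1-3)
    by (simp_all add: norm2_sq_eq_sum[of _ n] U_def V_def)
  have "(\<Sum>i<n. (b * u $ i - a * y $ i)\<^sup>2)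
      = (\<Sum>i<n. b\<^sup>2 * (u $ i)\<^sup>2 - 2 * a * b * (u $ i * y $ i) + a\<^sup>2 * (y $ i)\<^sup>2)"
    by (intro sum.cong) (simp_all add: power2_eq_square algebra_simps)
  also have "\<dots> = a\<^sup>2 + b\<^sup>2"
    using u y uy by (simp add: sum.distrib sum_subtractf sum_distrib_left[symmetric])
  finally have "a\<^sup>2 + b\<^sup>2 = (\<Sum>i<n. (b * U i - a * V i)\<^sup>2)"
    by (simp add: U_def V_def algebra_simps)
  also have "\<dots> \<le> (\<Sum>i<n. 2 * b\<^sup>2 * (U i)\<^sup>2 + 2 * a\<^sup>2 * (V i)\<^sup>2)"
  proof (rule sum_mono)
    show "(b * X - a * Z)\<^sup>2 \<le> 2 * b\<^sup>2 * X\<^sup>2 + 2 * a\<^sup>2 * Z\<^sup>2" for X Z :: real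
      using zero_le_power2[of "b * X + a * Z"] by (simp add: power2_eq_square algebra_simps)
  qed
  also have "\<dots> = 2 * b\<^sup>2 * (\<Sum>i<n. (U i)\<^sup>2) + 2 * a\<^sup>2 * (\<Sum>i<n. (V i)\<^sup>2)"
    by (simp add: sum.distrib sum_distrib_left)
  also have "\<dots> \<le> (a\<^sup>2 + b\<^sup>2) / 2"
    using mult_left_mono[OF U, of "2 * b\<^sup>2"] mult_left_mono[OF V, of "2 * a\<^sup>2"] by simp
  finally have "a = 0"
    by (simp add: sum_power2_le_zero_iff)
  then show False
    using u U by (simp add: U_def)
qed

section \<open>Contractive recurrences\<close>

lemma power2_add_le_weighted:
  fixes x y s :: real
  assumes "s > 0"
  shows "(x + y)\<^sup>2 \<le> (1 + s) * x\<^sup>2 + (1 + 1 / s) * y\<^sup>2"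
proof -
  have "(1 + s) * x\<^sup>2 + (1 + 1 / s) * y\<^sup>2 - (x + y)\<^sup>2 = (s * x - y)\<^sup>2 / s"
    using assms by (simp add: field_simps power2_eq_square)
  then show ?thesis
    using assms by (metis diff_ge_0_iff_ge divide_nonneg_pos zero_le_power2)
qed

lemma backward_contraction_bound:
  fixes x :: "nat \<Rightarrow> real"
  assumes "p > 1" "b \<ge> 0" "\<And>k. k < m \<Longrightarrow> \<bar>x k\<bar> \<le> (\<bar>x (Suc k)\<bar> + b) / p"
  shows "\<bar>x 0\<bar> \<le> \<bar>x m\<bar> / p ^ m + b / (p - 1)"
  using assms(3)
proof (induction m arbitrary: x)
  case 0
  then show ?case
    using assms(1,2) by simp
next
  case (Suc m)
  have "\<bar>x 0\<bar> \<le> (\<bar>x 1\<bar> + b) / p"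
    using Suc.prems[of 0] by simp
  also have "\<dots> \<le> (\<bar>x (Suc m)\<bar> / p ^ m + b / (p - 1) + b) / p"
    using Suc.IH[of "x \<circ> Suc"] Suc.prems assms(1) by (intro divide_right_mono add_right_mono) auto
  also have "\<dots> = \<bar>x (Suc m)\<bar> / p ^ Suc m + b / (p - 1)"
    using assms(1) by (simp add: field_simps)
  finally show ?case .
qed

lemma contractive_recurrence_sum_sq:
  fixes x y :: "nat \<Rightarrow> real"
  assumes "\<bar>phi\<bar> > 1" "\<And>k. k < m \<Longrightarrow> x (Suc k) = x k / phi + y k"
  defines "K \<equiv> \<bar>phi\<bar> / (\<bar>phi\<bar> - 1)"
  shows "(\<Sum>k\<le>m. (x k)\<^sup>2) \<le> K * ((x 0)\<^sup>2 + K * (\<Sum>k<m. (y k)\<^sup>2))"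
proof -
  define p where "p = \<bar>phi\<bar>"
  have p: "p > 1" "K = p / (p - 1)"
    using assms(1) by (simp_all add: p_def K_def)
  have step: "(x (Suc k))\<^sup>2 \<le> (x k)\<^sup>2 / p + K * (y k)\<^sup>2" if "k < m" for k
  proof -
    have "(x k / phi + y k)\<^sup>2 \<le> (1 + (p - 1)) * (x k / phi)\<^sup>2 + (1 + 1 / (p - 1)) * (y k)\<^sup>2"
      using p by (intro power2_add_le_weighted) simp
    also have "(x k / phi)\<^sup>2 = (x k)\<^sup>2 / p\<^sup>2"
      by (simp add: p_def power_divide)
    also have "(1 + (p - 1)) * ((x k)\<^sup>2 / p\<^sup>2) + (1 + 1 / (p - 1)) * (y k)\<^sup>2
        = (x k)\<^sup>2 / p + K * (y k)\<^sup>2"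
      unfolding p(2) using p(1) by (simp add: field_simps power2_eq_square)
    finally show ?thesis
      using assms(2)[OF that] by simp
  qed
  have telescope: "(1 - 1 / p) * (\<Sum>k\<le>j. (x k)\<^sup>2) + (x j)\<^sup>2 / p \<le> (x 0)\<^sup>2 + K * (\<Sum>k<j. (y k)\<^sup>2)"
    if "j \<le> m" for j
    using that
  proof (induction j)
    case (Suc j)
    then show ?case
      using step[of j] by (simp add: algebra_simps sum_distrib_left)
  qed (simp add: algebra_simps)
  have "(x m)\<^sup>2 / p \<ge> 0"
    using p(1) by simp
  with telescope[of m] have le: "(1 - 1 / p) * (\<Sum>k\<le>m. (x k)\<^sup>2) \<le> (x 0)\<^sup>2 + K * (\<Sum>k<m. (y k)\<^sup>2)"
    by linarith
  have "(\<Sum>k\<le>m. (x k)\<^sup>2) = K * ((1 - 1 / p) * (\<Sum>k\<le>m. (x k)\<^sup>2))"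
    unfolding p(2) using p(1) by (simp add: field_simps)
  also have "\<dots> \<le> K * ((x 0)\<^sup>2 + K * (\<Sum>k<m. (y k)\<^sup>2))"
    using le p by (intro mult_left_mono) auto
  finally show ?thesis .
qed

section \<open>Eigenvectors with eigenvalue close to phi + 1/phi\<close>

definition w_residual_const :: "real \<Rightarrow> real \<Rightarrow> real" where
  "w_residual_const eps phi =
    (let p = \<bar>phi\<bar>; \<kappa> = \<bar>phi - eps\<bar> / 2; K = p / (p - 1);
         B = (1 / p + \<bar>eps\<bar> + \<kappa>) * (2 + 1 / (p - 1)) / \<kappa>
     in K * (B\<^sup>2 + K) / (p - 1)\<^sup>2)"

lemma w_residual_const_pos:
  assumes "\<bar>phi\<bar> > 1" "eps \<noteq> phi"
  shows "w_residual_const eps phi > 0"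
  using assms by (simp add: w_residual_const_def Let_def add_nonneg_pos)

locale tridiag_recurrence =
  fixes eps phi lam :: real and n :: nat and v :: "nat \<Rightarrow> real"
  assumes phi_gt_1: "\<bar>phi\<bar> > 1" and n_ge_2: "n \<ge> 2"
    and first_row: "eps * v 0 + v 1 = lam * v 0"
    and interior_row: "\<And>i. 1 \<le> i \<Longrightarrow> i + 2 \<le> n \<Longrightarrow> v (i - 1) + v (i + 1) = lam * v i"
    and unit_sum_sq: "(\<Sum>i<n. (v i)\<^sup>2) = 1"
begin

abbreviation \<delta> :: real where
  "\<delta> \<equiv> lam - (phi + 1 / phi)"

definition inv_phi_defect :: "nat \<Rightarrow> real" where
  "inv_phi_defect i = v i - v (i - 1) / phi"

definition phi_defect :: "nat \<Rightarrow> real" where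
  "phi_defect i = v i - phi * v (i - 1)"

definition w_residual :: "nat \<Rightarrow> real" where
  "w_residual i = v i - v (n - 1) * (1 / phi ^ (n - 1 - i))"

lemma phi_nonzero: "phi \<noteq> 0"
  using phi_gt_1 by auto

lemma abs_entry_le_1: "i < n \<Longrightarrow> \<bar>v i\<bar> \<le> 1"
  using member_le_sum[of i "{..<n}" "\<lambda>i. (v i)\<^sup>2"] unit_sum_sq by (simp add: abs_square_le_1)

lemma inv_phi_defect_step:
  assumes "1 \<le> i" "i + 2 \<le> n"
  shows "inv_phi_defect (i + 1) = phi * inv_phi_defect i + \<delta> * v i"
proof -
  have row: "v (Suc i) = lam * v i - v (i - 1)"
    using interior_row[OF assms] by simp
  show ?thesis
    using phi_nonzero by (simp add: inv_phi_defect_def row field_simps)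
qed

lemma phi_defect_step:
  assumes "1 \<le> i" "i + 2 \<le> n"
  shows "phi_defect (i + 1) = phi_defect i / phi + \<delta> * v i"
proof -
  have row: "v (Suc i) = lam * v i - v (i - 1)"
    using interior_row[OF assms] by simp
  show ?thesis
    using phi_nonzero by (simp add: phi_defect_def row field_simps)
qed

lemma w_residual_step:
  assumes "1 \<le> i" "i \<le> n - 1"
  shows "w_residual (i - 1) = w_residual i / phi + (- phi_defect i / phi)"
proof -
  have exp: "n - 1 - (i - 1) = Suc (n - 1 - i)"
    using assms n_ge_2 by arith
  have "phi ^ (n - 1 - (i - 1)) = phi * phi ^ (n - 1 - i)"
    unfolding exp by simp
  then show ?thesis
    using phi_nonzero by (simp add: w_residual_def phi_defect_def field_simps)
qed

lemma abs_inv_phi_defect_le: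
  assumes "k < n - 2"
  shows "\<bar>inv_phi_defect (Suc k)\<bar> \<le> (\<bar>inv_phi_defect (Suc (Suc k))\<bar> + \<bar>\<delta>\<bar>) / \<bar>phi\<bar>"
proof -
  have "phi * inv_phi_defect (Suc k) = inv_phi_defect (Suc (Suc k)) - \<delta> * v (Suc k)"
    using inv_phi_defect_step[of "Suc k"] assms by simp
  then have "\<bar>phi\<bar> * \<bar>inv_phi_defect (Suc k)\<bar> \<le> \<bar>inv_phi_defect (Suc (Suc k))\<bar> + \<bar>\<delta>\<bar> * \<bar>v (Suc k)\<bar>"
    by (metis abs_mult abs_triangle_ineq4)
  also have "\<dots> \<le> \<bar>inv_phi_defect (Suc (Suc k))\<bar> + \<bar>\<delta>\<bar>"
    using abs_entry_le_1[of "Suc k"] assms by (simp add: mult_left_le)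
  finally show ?thesis
    using phi_gt_1 by (simp add: pos_le_divide_eq mult.commute)
qed

lemma abs_first_entry_le:
  assumes "\<bar>\<delta>\<bar> \<le> \<bar>phi - eps\<bar> / 2"
  shows "\<bar>phi - eps\<bar> / 2 * \<bar>v 0\<bar> \<le> 2 * (1 / \<bar>phi\<bar>) ^ (n - 2) + \<bar>\<delta>\<bar> / (\<bar>phi\<bar> - 1)"
proof -
  have last: "\<bar>inv_phi_defect (n - 1)\<bar> \<le> 2"
  proof -
    have "\<bar>inv_phi_defect (n - 1)\<bar> \<le> \<bar>v (n - 1)\<bar> + \<bar>v (n - 2)\<bar> / \<bar>phi\<bar>"
      unfolding inv_phi_defect_def diff_diff_left one_add_one
      by (metis abs_divide abs_triangle_ineq4)
    also have "\<dots> \<le> 1 + 1"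
      using abs_entry_le_1[of "n - 1"] abs_entry_le_1[of "n - 2"] n_ge_2 phi_gt_1
      by (intro add_mono) (auto simp: divide_le_eq_1)
    finally show ?thesis by simp
  qed
  have "Suc (n - 2) = n - 1"
    using n_ge_2 by simp
  then have "\<bar>inv_phi_defect 1\<bar> \<le> \<bar>inv_phi_defect (n - 1)\<bar> / \<bar>phi\<bar> ^ (n - 2) + \<bar>\<delta>\<bar> / (\<bar>phi\<bar> - 1)"
    using backward_contraction_bound[of "\<bar>phi\<bar>" "\<bar>\<delta>\<bar>" "n - 2" "\<lambda>k. inv_phi_defect (Suc k)"]
      abs_inv_phi_defect_le phi_gt_1 by simp
  also have "\<dots> \<le> 2 * (1 / \<bar>phi\<bar>) ^ (n - 2) + \<bar>\<delta>\<bar> / (\<bar>phi\<bar> - 1)"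
    using last by (simp add: power_one_over divide_right_mono)
  also have "inv_phi_defect 1 = (phi - eps + \<delta>) * v 0"
    using first_row by (simp add: inv_phi_defect_def algebra_simps)
  finally have "\<bar>phi - eps + \<delta>\<bar> * \<bar>v 0\<bar> \<le> 2 * (1 / \<bar>phi\<bar>) ^ (n - 2) + \<bar>\<delta>\<bar> / (\<bar>phi\<bar> - 1)"
    by (simp add: abs_mult)
  moreover have "\<bar>phi - eps\<bar> / 2 \<le> \<bar>phi - eps + \<delta>\<bar>"
    using assms abs_triangle_ineq4[of "phi - eps + \<delta>" "\<delta>"] by (simp only: add_diff_cancel_right') argo
  ultimately show ?thesis
    by (meson abs_ge_zero mult_right_mono order_trans)
qed

lemma phi_defect_sum_sq_le:
  defines "K \<equiv> \<bar>phi\<bar> / (\<bar>phi\<bar> - 1)"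
  shows "(\<Sum>k<n - 1. (phi_defect (Suc k))\<^sup>2) \<le> K * ((phi_defect 1)\<^sup>2 + K * \<delta>\<^sup>2)"
proof -
  have K: "K > 0"
    using phi_gt_1 by (simp add: K_def)
  have "{..n - 2} = {..<n - 1}"
    using n_ge_2 by auto
  then have "(\<Sum>k<n - 1. (phi_defect (Suc k))\<^sup>2)
      \<le> K * ((phi_defect 1)\<^sup>2 + K * (\<Sum>k<n - 2. (\<delta> * v (Suc k))\<^sup>2))"
    using contractive_recurrence_sum_sq[OF phi_gt_1, of "n - 2" "\<lambda>k. phi_defect (Suc k)"]
      phi_defect_step by (simp add: K_def)
  also have "(\<Sum>k<n - 2. (\<delta> * v (Suc k))\<^sup>2) \<le> \<delta>\<^sup>2"
  proof -
    have "(\<Sum>k<n - 2. (v (Suc k))\<^sup>2) \<le> (v 0)\<^sup>2 + (\<Sum>k<n - 1. (v (Suc k))\<^sup>2)"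
      by (intro add_increasing sum_mono2) auto
    also have "\<dots> = 1"
      using unit_sum_sq n_ge_2 sum.lessThan_Suc_shift[of "\<lambda>i. (v i)\<^sup>2" "n - 1"] by simp
    finally show ?thesis
      by (simp add: power_mult_distrib sum_distrib_left[symmetric] mult_left_le)
  qed
  finally show ?thesis
    using K by (simp add: mult_left_mono)
qed

lemma w_residual_sum_sq_le_phi_defect:
  "(\<Sum>i<n. (w_residual i)\<^sup>2) \<le> (\<Sum>k<n - 1. (phi_defect (Suc k))\<^sup>2) / (\<bar>phi\<bar> - 1)\<^sup>2"
proof -
  define K where "K = \<bar>phi\<bar> / (\<bar>phi\<bar> - 1)"
  define D where "D = (\<Sum>k<n - 1. (phi_defect (Suc k))\<^sup>2)"
  have "(\<Sum>k<n - 1. (- phi_defect (n - 1 - k) / phi)\<^sup>2) = D / \<bar>phi\<bar>\<^sup>2"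
  proof -
    have "(\<Sum>k<n - 1. (phi_defect (n - 1 - k))\<^sup>2) = (\<Sum>k<n - 1. (phi_defect (Suc (n - 1 - Suc k)))\<^sup>2)"
      by (intro sum.cong) (auto simp: Suc_diff_Suc)
    also have "\<dots> = D"
      unfolding D_def by (rule sum.nat_diff_reindex)
    finally show ?thesis
      by (simp add: power_divide sum_divide_distrib[symmetric])
  qed
  moreover have "w_residual (n - 1 - Suc k) = w_residual (n - 1 - k) / phi + (- phi_defect (n - 1 - k) / phi)"
    if "k < n - 1" for k
    using w_residual_step[of "n - 1 - k"] that by (simp add: Suc_diff_Suc)
  ultimately have "(\<Sum>k<n. (w_residual (n - Suc k))\<^sup>2) \<le> K * ((w_residual (n - 1))\<^sup>2 + K * (D / \<bar>phi\<bar>\<^sup>2))"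
    using contractive_recurrence_sum_sq[OF phi_gt_1, of "n - 1" "\<lambda>k. w_residual (n - 1 - k)"
        "\<lambda>k. - phi_defect (n - 1 - k) / phi"] n_ge_2
    by (simp add: K_def lessThan_Suc_atMost[symmetric] del: power2_abs)
  also have "w_residual (n - 1) = 0"
    by (simp add: w_residual_def)
  also have "K * (0\<^sup>2 + K * (D / \<bar>phi\<bar>\<^sup>2)) = D / (\<bar>phi\<bar> - 1)\<^sup>2"
  proof -
    have "p / (p - 1) * (p / (p - 1) * (D / p\<^sup>2)) = D / (p - 1)\<^sup>2" if "p > 1" for p :: real
      using that by (simp add: divide_simps) (simp add: power2_eq_square)
    from this[OF phi_gt_1] show ?thesis
      unfolding K_def by simp
  qed
  finally show ?thesis
    unfolding D_def sum.nat_diff_reindex[of "\<lambda>i. (w_residual i)\<^sup>2"] .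
qed

lemma abs_phi_defect_1_le:
  assumes "eps \<noteq> phi" "\<bar>\<delta>\<bar> \<le> \<bar>phi - eps\<bar> / 2"
  defines "\<kappa> \<equiv> \<bar>phi - eps\<bar> / 2"
  shows "\<bar>phi_defect 1\<bar>
    \<le> (1 / \<bar>phi\<bar> + \<bar>eps\<bar> + \<kappa>) * (2 + 1 / (\<bar>phi\<bar> - 1)) / \<kappa> * ((1 / \<bar>phi\<bar>) ^ (n - 2) + \<bar>\<delta>\<bar>)"
proof -
  define p where "p = \<bar>phi\<bar>"
  define t where "t = (1 / p) ^ (n - 2) + \<bar>\<delta>\<bar>"
  have p: "p > 1" and \<kappa>: "\<kappa> > 0"
    using phi_gt_1 assms(1) by (simp_all add: p_def \<kappa>_def)
  have "\<kappa> * \<bar>v 0\<bar> \<le> 2 * (1 / p) ^ (n - 2) + \<bar>\<delta>\<bar> / (p - 1)"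
    using abs_first_entry_le assms(2) by (simp add: p_def \<kappa>_def)
  also have "\<dots> \<le> (2 + 1 / (p - 1)) * t"
    using p by (simp add: t_def algebra_simps divide_right_mono)
  finally have v0: "\<bar>v 0\<bar> \<le> (2 + 1 / (p - 1)) * t / \<kappa>"
    using \<kappa> by (simp add: pos_le_divide_eq mult.commute)
  have "phi_defect 1 = (1 / phi - eps + \<delta>) * v 0"
    using first_row by (simp add: phi_defect_def algebra_simps)
  moreover have "\<bar>1 / phi - eps + \<delta>\<bar> \<le> 1 / p + \<bar>eps\<bar> + \<kappa>"
    using abs_triangle_ineq[of "1 / phi - eps" \<delta>] abs_triangle_ineq4[of "1 / phi" eps] assms(2)
    unfolding p_def \<kappa>_def abs_divide abs_one by argo
  ultimately have "\<bar>phi_defect 1\<bar> \<le> (1 / p + \<bar>eps\<bar> + \<kappa>) * \<bar>v 0\<bar>"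
    by (simp add: abs_mult mult_right_mono)
  also have "\<dots> \<le> (1 / p + \<bar>eps\<bar> + \<kappa>) * (2 + 1 / (p - 1)) / \<kappa> * t"
    using mult_left_mono[OF v0, of "1 / p + \<bar>eps\<bar> + \<kappa>"] \<kappa> p by (simp add: mult.assoc)
  finally show ?thesis
    by (simp add: p_def t_def)
qed

lemma w_residual_sum_sq_le:
  assumes "eps \<noteq> phi" "\<bar>\<delta>\<bar> \<le> \<bar>phi - eps\<bar> / 2"
  shows "(\<Sum>i<n. (w_residual i)\<^sup>2) \<le> w_residual_const eps phi * ((1 / \<bar>phi\<bar>) ^ (n - 2) + \<bar>\<delta>\<bar>)\<^sup>2"
proof -
  define p where "p = \<bar>phi\<bar>"
  define \<kappa> where "\<kappa> = \<bar>phi - eps\<bar> / 2"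
  define B where "B = (1 / p + \<bar>eps\<bar> + \<kappa>) * (2 + 1 / (p - 1)) / \<kappa>"
  define K where "K = p / (p - 1)"
  define t where "t = (1 / p) ^ (n - 2) + \<bar>\<delta>\<bar>"
  have p: "p > 1" and K: "K > 0"
    using phi_gt_1 by (simp_all add: p_def K_def)
  have "\<bar>phi_defect 1\<bar> \<le> B * t"
    using abs_phi_defect_1_le[OF assms] by (simp add: p_def \<kappa>_def B_def t_def)
  then have "(phi_defect 1)\<^sup>2 \<le> (B * t)\<^sup>2"
    by (simp add: power2_le_iff_abs_le)
  moreover have "\<bar>\<delta>\<bar> \<le> t"
    using p by (simp add: t_def)
  then have "\<delta>\<^sup>2 \<le> t\<^sup>2"
    using power_mono[of "\<bar>\<delta>\<bar>" t 2] by simp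
  ultimately have "K * ((phi_defect 1)\<^sup>2 + K * \<delta>\<^sup>2) \<le> K * ((B * t)\<^sup>2 + K * t\<^sup>2)"
    using K by (intro mult_left_mono add_mono) auto
  then have "(\<Sum>k<n - 1. (phi_defect (Suc k))\<^sup>2) \<le> K * ((B * t)\<^sup>2 + K * t\<^sup>2)"
    using phi_defect_sum_sq_le unfolding K_def p_def by linarith
  then have "(\<Sum>i<n. (w_residual i)\<^sup>2) \<le> K * ((B * t)\<^sup>2 + K * t\<^sup>2) / (p - 1)\<^sup>2"
    using w_residual_sum_sq_le_phi_defect divide_right_mono[of _ _ "(p - 1)\<^sup>2"] unfolding p_def
    by (meson order_trans zero_le_power2)
  also have "\<dots> = w_residual_const eps phi * t\<^sup>2"
    unfolding w_residual_const_def Let_def p_def [symmetric] \<kappa>_def [symmetric] K_def [symmetric]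
      B_def [symmetric]
    by (simp add: power_mult_distrib algebra_simps)
  finally show ?thesis
    by (simp add: t_def p_def)
qed
end

lemma unit_eigenvector_tridiag_recurrence:
  assumes "\<bar>phi\<bar> > 1" "n \<ge> 2" "eigenvector (tridiag_T n eps phi) u lam" "norm2 u = 1"
  shows "tridiag_recurrence eps phi lam n (\<lambda>i. u $ i)"
proof
  have u: "u \<in> carrier_vec n" and Au: "tridiag_T n eps phi *\<^sub>v u = lam \<cdot>\<^sub>v u"
    using assms(3) tridiag_T_carrier[of n eps phi] unfolding eigenvector_def by auto
  have row: "(tridiag_T n eps phi *\<^sub>v u) $ i = lam * u $ i" if "i < n" for i
    using Au u that by simp
  have "eps * u $ 0 + u $ 1 = (tridiag_T n eps phi *\<^sub>v u) $ 0"
    using tridiag_T_mult_vec_first[OF assms(2) u] by simp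
  also have "\<dots> = lam * u $ 0"
    using row assms(2) by simp
  finally show "eps * u $ 0 + u $ 1 = lam * u $ 0" .
  show "u $ (i - 1) + u $ (i + 1) = lam * u $ i" if "1 \<le> i" "i + 2 \<le> n" for i
    using tridiag_T_mult_vec_interior[OF that u] row[of i] that by simp
  show "(\<Sum>i<n. (u $ i)\<^sup>2) = 1"
    using norm2_sq_eq_sum[OF u] assms(4) by simp
qed (use assms in auto)

lemma unit_eigenvector_near_w:
  assumes "\<bar>phi\<bar> > 1" "eps \<noteq> phi" "n \<ge> 2"
    and "eigenvector (tridiag_T n eps phi) u lam" "norm2 u = 1"
    and "\<bar>lam - (phi + 1 / phi)\<bar> \<le> \<bar>phi - eps\<bar> / 2"
  shows "norm2 (u - u $ (n - 1) \<cdot>\<^sub>v w_vec n phi)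
    \<le> sqrt (w_residual_const eps phi) * ((1 / \<bar>phi\<bar>) ^ (n - 2) + \<bar>lam - (phi + 1 / phi)\<bar>)"
proof -
  interpret tridiag_recurrence eps phi lam n "\<lambda>i. u $ i"
    using unit_eigenvector_tridiag_recurrence assms(1,3-5) .
  have u: "u \<in> carrier_vec n"
    using assms(4) by (rule eigenvector_tridiag_T_carrier)
  have "(norm2 (u - u $ (n - 1) \<cdot>\<^sub>v w_vec n phi))\<^sup>2 = (\<Sum>i<n. (w_residual i)\<^sup>2)"
    using u by (simp add: norm2_sq_eq_sum[of _ n] w_vec_def w_residual_def)
  also have "\<dots> \<le> w_residual_const eps phi * ((1 / \<bar>phi\<bar>) ^ (n - 2) + \<bar>lam - (phi + 1 / phi)\<bar>)\<^sup>2"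
    using w_residual_sum_sq_le assms(2,6) .
  also have "\<dots> = (sqrt (w_residual_const eps phi) * ((1 / \<bar>phi\<bar>) ^ (n - 2) + \<bar>lam - (phi + 1 / phi)\<bar>))\<^sup>2"
    using w_residual_const_pos[OF assms(1,2)] by (simp add: power_mult_distrib)
  finally show ?thesis
    by (rule power2_le_imp_le) (use w_residual_const_pos[OF assms(1,2)] in simp)
qed

section \<open>Asymptotics in n\<close>

lemma abs_add_inverse_gt_2:
  fixes x :: real
  assumes "\<bar>x\<bar> > 1"
  shows "\<bar>x + 1 / x\<bar> > 2"
proof -
  have "x + 1 / x = (x\<^sup>2 + 1) / x"
    using assms by (auto simp: field_simps power2_eq_square)
  then have "\<bar>x + 1 / x\<bar> = (\<bar>x\<bar>\<^sup>2 + 1) / \<bar>x\<bar>"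
    by (simp add: abs_divide)
  moreover have "(\<bar>x\<bar> - 1)\<^sup>2 > 0"
    using assms by simp
  ultimately show ?thesis
    using assms by (simp add: pos_less_divide_eq power2_eq_square algebra_simps)
qed

lemma tendsto_power_diff_zero:
  fixes p :: real
  assumes "p > 1"
  shows "(\<lambda>n. (1 / p) ^ (n - k)) \<longlonglongrightarrow> 0"
  using filterlim_compose[OF LIMSEQ_realpow_zero filterlim_minus_const_nat_at_top, of "1 / p" k] assms
  by simp

lemma eventually_outlier:
  assumes "\<bar>phi\<bar> > 1" "\<And>n. n \<ge> 2 \<Longrightarrow> eigenvalue (tridiag_T n eps phi) (\<nu> n)"
    and "\<nu> \<longlonglongrightarrow> phi + 1 / phi"
  shows "\<forall>\<^sub>F n in sequentially. outlier (tridiag_T n eps phi) (\<nu> n)"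
proof -
  have "\<forall>\<^sub>F n in sequentially. 2 < \<bar>\<nu> n\<bar>"
    using order_tendstoD(1)[OF tendsto_rabs[OF assms(3)] abs_add_inverse_gt_2[OF assms(1)]] .
  then show ?thesis
    using eventually_ge_at_top[of 2]
    by eventually_elim (auto simp: outlier_def assms(2))
qed

definition gap_const :: "real \<Rightarrow> real \<Rightarrow> real" where
  "gap_const eps phi = min (\<bar>phi - eps\<bar> / 2) (1 / (4 * sqrt (w_residual_const eps phi)))"

lemma gap_const_pos:
  assumes "\<bar>phi\<bar> > 1" "eps \<noteq> phi"
  shows "gap_const eps phi > 0"
  using assms w_residual_const_pos[OF assms] by (simp add: gap_const_def)

lemma unit_eigenvector_near_w_half:
  assumes "\<bar>phi\<bar> > 1" "eps \<noteq> phi" "n \<ge> 2" "(1 / \<bar>phi\<bar>) ^ (n - 2) < gap_const eps phi"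
    and "eigenvector (tridiag_T n eps phi) u lam" "norm2 u = 1"
    and "\<bar>lam - (phi + 1 / phi)\<bar> < gap_const eps phi"
  shows "norm2 (u - u $ (n - 1) \<cdot>\<^sub>v w_vec n phi) \<le> 1 / 2"
proof -
  define C where "C = sqrt (w_residual_const eps phi)"
  define c where "c = gap_const eps phi"
  have C: "C > 0"
    using w_residual_const_pos[OF assms(1,2)] by (simp add: C_def)
  have "norm2 (u - u $ (n - 1) \<cdot>\<^sub>v w_vec n phi) \<le> C * ((1 / \<bar>phi\<bar>) ^ (n - 2) + \<bar>lam - (phi + 1 / phi)\<bar>)"
    using unit_eigenvector_near_w[OF assms(1-3,5,6)] assms(7)
    by (simp add: C_def gap_const_def)
  also have "\<dots> \<le> C * (2 * c)"
    using assms(4,7) C by (intro mult_left_mono) (auto simp: c_def)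
  also have "\<dots> \<le> C * (2 * (1 / (4 * C)))"
    using C by (intro mult_left_mono) (auto simp: c_def C_def gap_const_def)
  also have "\<dots> = 1 / 2"
    using C by simp
  finally show ?thesis .
qed

lemma tridiag_T_eigenvalue_near_unique:
  assumes "\<bar>phi\<bar> > 1" "eps \<noteq> phi" "n \<ge> 2" "(1 / \<bar>phi\<bar>) ^ (n - 2) < gap_const eps phi"
    and "eigenvalue (tridiag_T n eps phi) lam" "\<bar>lam - (phi + 1 / phi)\<bar> < gap_const eps phi"
    and "eigenvalue (tridiag_T n eps phi) mu" "\<bar>mu - (phi + 1 / phi)\<bar> < gap_const eps phi"
  shows "lam = mu"
proof (rule ccontr)
  assume "lam \<noteq> mu"
  obtain u where u: "eigenvector (tridiag_T n eps phi) u lam" "norm2 u = 1"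
    using eigenvalue_imp_unit_eigenvector[OF tridiag_T_carrier assms(5)] .
  obtain y where y: "eigenvector (tridiag_T n eps phi) y mu" "norm2 y = 1"
    using eigenvalue_imp_unit_eigenvector[OF tridiag_T_carrier assms(7)] .
  show False
  proof (rule orthonormal_not_both_near_line)
    show "u \<bullet> y = 0"
      using eigenvector_symmetric_orthogonal[OF tridiag_T_carrier transpose_tridiag_T u(1) y(1)]
        \<open>lam \<noteq> mu\<close> .
    show "norm2 (u - u $ (n - 1) \<cdot>\<^sub>v w_vec n phi) \<le> 1 / 2"
      using unit_eigenvector_near_w_half[OF assms(1-4) u assms(6)] .
    show "norm2 (y - y $ (n - 1) \<cdot>\<^sub>v w_vec n phi) \<le> 1 / 2"
      using unit_eigenvector_near_w_half[OF assms(1-4) y assms(8)] .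
  qed (use u y eigenvector_tridiag_T_carrier in \<open>auto simp: w_vec_def\<close>)
qed

lemma eventually_eigenvalue_gap:
  assumes "\<bar>phi\<bar> > 1" "eps \<noteq> phi" "\<And>n. n \<ge> 2 \<Longrightarrow> eigenvalue (tridiag_T n eps phi) (\<nu> n)"
    and "\<nu> \<longlonglongrightarrow> phi + 1 / phi"
  shows "\<forall>\<^sub>F n in sequentially. \<forall>lam. eigenvalue (tridiag_T n eps phi) lam \<and> lam \<noteq> \<nu> n
          \<longrightarrow> \<bar>lam - (phi + 1 / phi)\<bar> \<ge> gap_const eps phi"
proof -
  note c = gap_const_pos[OF assms(1,2)]
  have "\<forall>\<^sub>F n in sequentially. (1 / \<bar>phi\<bar>) ^ (n - 2) < gap_const eps phi"
    using order_tendstoD(2)[OF tendsto_power_diff_zero c] assms(1) by simp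
  moreover have "\<forall>\<^sub>F n in sequentially. \<bar>\<nu> n - (phi + 1 / phi)\<bar> < gap_const eps phi"
    using order_tendstoD(2)[OF tendsto_rabs_zero[OF LIM_zero[OF assms(4)]] c] .
  ultimately show ?thesis
    using eventually_ge_at_top[of 2]
    by eventually_elim (use tridiag_T_eigenvalue_near_unique[OF assms(1,2)] assms(3) in force)
qed

lemma tendsto_norm2_minus_proj_onto_w:
  assumes "\<bar>phi\<bar> > 1" "eps \<noteq> phi"
    and "\<And>n. n \<ge> 2 \<Longrightarrow> eigenvector (tridiag_T n eps phi) (y n) (\<nu> n) \<and> norm2 (y n) = 1"
    and "\<nu> \<longlonglongrightarrow> phi + 1 / phi"
  shows "(\<lambda>n. norm2 (y n - proj_onto (w_vec n phi) (y n))) \<longlonglongrightarrow> 0"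
proof -
  define C where "C = sqrt (w_residual_const eps phi)"
  have dist: "(\<lambda>n. \<bar>\<nu> n - (phi + 1 / phi)\<bar>) \<longlonglongrightarrow> 0"
    using tendsto_rabs_zero[OF LIM_zero[OF assms(4)]] .
  have "\<forall>\<^sub>F n in sequentially. \<bar>\<nu> n - (phi + 1 / phi)\<bar> < \<bar>phi - eps\<bar> / 2"
    using order_tendstoD(2)[OF dist, of "\<bar>phi - eps\<bar> / 2"] assms(2) by simp
  then have bound: "\<forall>\<^sub>F n in sequentially. norm2 (y n - proj_onto (w_vec n phi) (y n))
      \<le> C * ((1 / \<bar>phi\<bar>) ^ (n - 2) + \<bar>\<nu> n - (phi + 1 / phi)\<bar>)"
    using eventually_ge_at_top[of 2]
  proof eventually_elim
    case (elim n)
    have y: "eigenvector (tridiag_T n eps phi) (y n) (\<nu> n)" "norm2 (y n) = 1"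
      using assms(3) elim by auto
    then have "y n \<in> carrier_vec n"
      by (simp add: eigenvector_tridiag_T_carrier)
    then have "norm2 (y n - proj_onto (w_vec n phi) (y n)) \<le> norm2 (y n - y n $ (n - 1) \<cdot>\<^sub>v w_vec n phi)"
      by (rule norm2_minus_proj_onto_le) (simp add: w_vec_def)
    also have "\<dots> \<le> C * ((1 / \<bar>phi\<bar>) ^ (n - 2) + \<bar>\<nu> n - (phi + 1 / phi)\<bar>)"
      using unit_eigenvector_near_w[OF assms(1,2) _ y] elim by (simp add: C_def)
    finally show ?case .
  qed
  have "(\<lambda>n. C * ((1 / \<bar>phi\<bar>) ^ (n - 2) + \<bar>\<nu> n - (phi + 1 / phi)\<bar>)) \<longlonglongrightarrow> 0"
    using tendsto_mult_right_zero[OF tendsto_add_zero[OF tendsto_power_diff_zero dist]] assms(1)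
    by simp
  from tendsto_sandwich[OF _ bound tendsto_const this] show ?thesis
    by (simp add: norm2_nonneg)
qed

theorem theorem3p3:
  fixes eps phi :: real and \<nu> :: "nat \<Rightarrow> real" and y :: "nat \<Rightarrow> real vec"
  assumes "\<bar>phi\<bar> > 1" and "eps \<noteq> phi"
    and "\<And>n. n \<ge> 2 \<Longrightarrow> eigenvector (tridiag_T n eps phi) (y n) (\<nu> n) \<and> norm2 (y n) = 1"
    and "\<nu> \<longlonglongrightarrow> phi + 1 / phi"
  shows "(\<forall>\<^sub>F n in sequentially. outlier (tridiag_T n eps phi) (\<nu> n))
    \<and> (\<exists>c > 0. \<forall>\<^sub>F n in sequentially. \<forall>lam. eigenvalue (tridiag_T n eps phi) lam \<and> lam \<noteq> \<nu> n
          \<longrightarrow> \<bar>lam - (phi + 1 / phi)\<bar> \<ge> c)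
    \<and> ((\<lambda>n. norm2 (y n - proj_onto (w_vec n phi) (y n))) \<longlonglongrightarrow> 0)"
proof -
  have eigenvalue: "eigenvalue (tridiag_T n eps phi) (\<nu> n)" if "n \<ge> 2" for n
    using assms(3)[OF that] unfolding eigenvalue_def by blast
  show ?thesis
    using eventually_outlier[OF assms(1) eigenvalue assms(4)]
      eventually_eigenvalue_gap[OF assms(1,2) eigenvalue assms(4)] gap_const_pos[OF assms(1,2)]
      tendsto_norm2_minus_proj_onto_w[OF assms]
    by blast
qed

end
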